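(* Let $k\geq2$ be an integer and $0<\epsilon\leq1-1/k$. Then there is no real number $B$ with $$B<\frac1k+\epsilon\frac{k-2}{k}+2\frac{\sqrt{k-1}}{k}\sqrt{\epsilon-\epsilon^2}$$ such that the following holds: for every $n$, every $h\in\mathbb{R}[x_1,\ldots,x_n]$ hyperbolic with respect to some $\mathbf{e}$, every $m$, and every $\mathbf{u}_1,\ldots,\mathbf{u}_m\in\Lambda_+(\mathbf{e})$ with $\operatorname{rk}(\mathbf{u}_i)\leq1$ and $\operatorname{tr}(\mathbf{u}_i)\leq\epsilon$ for all $i$ and $\mathbf{u}_1+\cdots+\mathbf{u}_m=\mathbf{e}$, there is a partition $S_1\cup\cdots\cup S_k=[m]$ with $\big\|\sum_{i\in S_j}\mathbf{u}_i\big\|\leq B$ for each $j\in[k]$. (That is, no bound independent of $m$ and of the degree $d$ of $h$ in this partition statement can be smaller than the displayed quantity.)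
   Context: A homogeneous polynomial $h$ of degree $d$ is hyperbolic with respect to $\mathbf{e}\in\mathbb{R}^n$ if $h(\mathbf{e})\neq0$ and for every $\mathbf{x}$, $t\mapsto h(t\mathbf{e}-\mathbf{x})$ has only real zeros; writing $h(t\mathbf{e}-\mathbf{x})=h(\mathbf{e})\prod_{j=1}^d(t-\lambda_j(\mathbf{x}))$ defines the eigenvalues. $\Lambda_+(\mathbf{e})=\{\mathbf{x}:\min_j\lambda_j(\mathbf{x})\geq0\}$, $\operatorname{tr}(\mathbf{x})=\sum_j\lambda_j(\mathbf{x})$, $\operatorname{rk}(\mathbf{x})=\#\{j:\lambda_j(\mathbf{x})\neq0\}$, $\|\mathbf{x}\|=\max_j|\lambda_j(\mathbf{x})|$. *)

theory Defs
  imports "HOL-Analysis.Analysis" "HOL-Library.Multiset"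
begin

text \<open>Vectors of R^n are represented as functions nat => real vanishing at indices >= n.
  A real polynomial in x_0..x_(n-1) is given by its coefficient function on exponent
  vectors (nat => nat) with finite support.\<close>

definition vecs :: "nat \<Rightarrow> (nat \<Rightarrow> real) set" where
  "vecs n = {x. \<forall>i\<ge>n. x i = 0}"

definition peval :: "nat \<Rightarrow> ((nat \<Rightarrow> nat) \<Rightarrow> real) \<Rightarrow> (nat \<Rightarrow> 'a::{real_algebra_1,comm_ring_1}) \<Rightarrow> 'a" where
  "peval n c x = (\<Sum>\<alpha>\<in>{\<alpha>. c \<alpha> \<noteq> 0}. of_real (c \<alpha>) * (\<Prod>i<n. x i ^ \<alpha> i))"

definition hom_poly :: "nat \<Rightarrow> nat \<Rightarrow> ((nat \<Rightarrow> nat) \<Rightarrow> real) \<Rightarrow> bool" where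
  "hom_poly n d c \<longleftrightarrow> finite {\<alpha>. c \<alpha> \<noteq> 0} \<and>
     (\<forall>\<alpha>. c \<alpha> \<noteq> 0 \<longrightarrow> (\<forall>i\<ge>n. \<alpha> i = 0) \<and> (\<Sum>i<n. \<alpha> i) = d)"

definition hyperbolic :: "nat \<Rightarrow> nat \<Rightarrow> ((nat \<Rightarrow> nat) \<Rightarrow> real) \<Rightarrow> (nat \<Rightarrow> real) \<Rightarrow> bool" where
  "hyperbolic n d c e \<longleftrightarrow> hom_poly n d c \<and> e \<in> vecs n \<and> peval n c e \<noteq> (0::real) \<and>
     (\<forall>x\<in>vecs n. \<forall>t::complex.
        peval n c (\<lambda>i. t * complex_of_real (e i) - complex_of_real (x i)) = 0 \<longrightarrow> t \<in> \<real>)"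

definition eigs :: "nat \<Rightarrow> nat \<Rightarrow> ((nat \<Rightarrow> nat) \<Rightarrow> real) \<Rightarrow> (nat \<Rightarrow> real) \<Rightarrow> (nat \<Rightarrow> real) \<Rightarrow> real multiset" where
  "eigs n d c e x = (THE L. size L = d \<and>
     (\<forall>t::real. peval n c (\<lambda>i. t * e i - x i) = peval n c e * (\<Prod>l\<in>#L. (t - l))))"

definition in_Lambda_plus :: "nat \<Rightarrow> nat \<Rightarrow> ((nat \<Rightarrow> nat) \<Rightarrow> real) \<Rightarrow> (nat \<Rightarrow> real) \<Rightarrow> (nat \<Rightarrow> real) \<Rightarrow> bool" where
  "in_Lambda_plus n d c e x \<longleftrightarrow> (\<forall>l\<in>#eigs n d c e x. 0 \<le> l)"

definition htr :: "nat \<Rightarrow> nat \<Rightarrow> ((nat \<Rightarrow> nat) \<Rightarrow> real) \<Rightarrow> (nat \<Rightarrow> real) \<Rightarrow> (nat \<Rightarrow> real) \<Rightarrow> real" where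
  "htr n d c e x = sum_mset (eigs n d c e x)"

definition hrk :: "nat \<Rightarrow> nat \<Rightarrow> ((nat \<Rightarrow> nat) \<Rightarrow> real) \<Rightarrow> (nat \<Rightarrow> real) \<Rightarrow> (nat \<Rightarrow> real) \<Rightarrow> nat" where
  "hrk n d c e x = size (filter_mset (\<lambda>l. l \<noteq> 0) (eigs n d c e x))"

text \<open>Spectral norm; by convention 0 when there are no eigenvalues (d = 0).\<close>
definition hnorm :: "nat \<Rightarrow> nat \<Rightarrow> ((nat \<Rightarrow> nat) \<Rightarrow> real) \<Rightarrow> (nat \<Rightarrow> real) \<Rightarrow> (nat \<Rightarrow> real) \<Rightarrow> real" where
  "hnorm n d c e x = (if eigs n d c e x = {#} then 0
      else Max (abs ` set_mset (eigs n d c e x)))"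

end

theory Submission
  imports Defs "HOL-Computational_Algebra.Fundamental_Theorem_Algebra"
begin

text \<open>The elementary symmetric polynomial e_d in M variables is hyperbolic with respect to the
  all-ones vector; the M coordinate vectors sum to it, have rank one and trace d / M, which is
  about \<epsilon> for d = \<lfloor>\<epsilon> M\<rfloor>. In a partition into k parts some part P has at least M / k
  elements. If every eigenvalue of its indicator vector 1_P were at most \<beta>, all the values
  e_n(\<beta> - 1_P) with n \<le> d would be nonnegative. These are the coefficients of
  (1 + (\<beta> - 1) t)^|P| (1 + \<beta> t)^(M - |P|), which satisfy a three-term recurrence; for \<beta> below
  the bound of the theorem its characteristic equation near n = \<epsilon> M has no real root, and the
  coefficients are forced to change sign.\<close>

section \<open>Elementary symmetric polynomials\<close>

fun esym :: "(nat \<Rightarrow> 'a::comm_ring_1) \<Rightarrow> nat \<Rightarrow> nat \<Rightarrow> 'a" where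
  "esym w 0 j = (if j = 0 then 1 else 0)"
| "esym w (Suc m) 0 = 1"
| "esym w (Suc m) (Suc j) = esym w m (Suc j) + w m * esym w m j"

lemma esym_0 [simp]: "esym w m 0 = 1"
  by (cases m) auto

lemma esym_eq_0: "m < j \<Longrightarrow> esym w m j = 0"
proof (induction m arbitrary: j)
  case (Suc m)
  then show ?case by (cases j) auto
qed simp

lemma esym_cong: "(\<And>i. i < m \<Longrightarrow> w i = v i) \<Longrightarrow> esym w m j = esym v m j"
proof (induction m arbitrary: j)
  case (Suc m)
  then show ?case by (cases j) auto
qed simp

lemma poly_esym: "poly (esym W m j) t = esym (\<lambda>i. poly (W i) t) m j"
proof (induction m arbitrary: j)
  case (Suc m)
  then show ?case by (cases j) auto
qed simp

lemma esym_of_real: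
  "esym (\<lambda>i. of_real (v i) :: 'a::{real_algebra_1,comm_ring_1}) m j = of_real (esym v m j)"
proof (induction m arbitrary: j)
  case (Suc m)
  then show ?case by (cases j) auto
qed simp

lemma esym_const: "esym (\<lambda>_. c) m j = of_nat (m choose j) * c ^ j"
proof (induction m arbitrary: j)
  case 0
  then show ?case by (cases j) auto
next
  case (Suc m)
  then show ?case by (cases j) (auto simp: algebra_simps)
qed

lemma esym_eq_coeff_prod: "esym v m j = coeff (\<Prod>i<m. [:1, v i:]) j"
proof (induction m arbitrary: j)
  case (Suc m)
  have "coeff (\<Prod>i<m. [:1, v i:]) 0 = 1"
    by (simp add: poly_0_coeff_0[symmetric] poly_prod del: poly_0_coeff_0)
  with Suc show ?case by (cases j) (auto simp: algebra_simps)
qed simp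

lemma esym_eq_sum_subsets: "esym w m j = (\<Sum>T | T \<subseteq> {..<m} \<and> card T = j. \<Prod>i\<in>T. w i)"
proof -
  have monom_prod: "(\<Prod>i\<in>T. monom (w i) 1) = monom (\<Prod>i\<in>T. w i) (card T)" if "finite T" for T
    using that by (induction T rule: finite_induct) (simp_all add: mult_monom)
  have "(\<Prod>i<m. [:1, w i:]) = (\<Prod>i<m. monom (w i) 1 + 1)"
    by (intro prod.cong) (simp_all add: monom_Suc monom_0 one_pCons)
  also have "\<dots> = (\<Sum>T\<in>Pow {..<m}. \<Prod>i\<in>T. monom (w i) 1)"
    by (simp add: prod_add)
  also have "\<dots> = (\<Sum>T\<in>Pow {..<m}. monom (\<Prod>i\<in>T. w i) (card T))"
    by (rule sum.cong[OF refl monom_prod]) (auto intro: finite_subset)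
  finally have "esym w m j = (\<Sum>T\<in>Pow {..<m}. if card T = j then \<Prod>i\<in>T. w i else 0)"
    by (simp add: esym_eq_coeff_prod coeff_sum coeff_monom eq_commute)
  also have "\<dots> = (\<Sum>T | T \<subseteq> {..<m} \<and> card T = j. \<Prod>i\<in>T. w i)"
    by (simp add: sum.If_cases Int_def conj_commute)
  finally show ?thesis .
qed

lemma esym_top: "esym w m m = (\<Prod>i<m. w i)"
  by (induction m) (auto simp: esym_eq_0)

lemma pderiv_esym:
  "pderiv (esym (\<lambda>i. [:a i, 1:]) m (Suc j)) = of_nat (m - j) * esym (\<lambda>i. [:a i, 1:]) m j"
proof (induction m arbitrary: j)
  case 0 then show ?case by simp
next
  case (Suc m)
  let ?E = "esym (\<lambda>i. [:a i, 1:]) m"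
  have rec: "pderiv (esym (\<lambda>i. [:a i, 1:]) (Suc m) (Suc j)) =
      pderiv (?E (Suc j)) + ([:a m, 1:] * pderiv (?E j) + ?E j)"
    by (simp add: pderiv_add pderiv_mult pderiv_pCons del: mult_pCons_left)
  show ?case
  proof (cases j)
    case 0
    then show ?thesis using rec Suc.IH[of 0] by (simp add: algebra_simps del: mult_pCons_left)
  next
    case (Suc j')
    show ?thesis
    proof (cases "j \<le> m")
      case True
      have "m - j' = Suc (m - j)" "Suc m - j = Suc (m - j)" using True Suc by auto
      then show ?thesis
        using rec Suc.IH[of j] Suc.IH[of j'] Suc
        by (simp add: algebra_simps del: mult_pCons_left)
    next
      case False
      then have "?E j = 0" "m - j' = 0" using Suc by (auto simp: esym_eq_0)
      then show ?thesis using rec Suc.IH[of j] Suc.IH[of j'] Suc False by simp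
    qed
  qed
qed

lemma degree_esym_le: "degree (esym (\<lambda>i. [:a i, 1:]) m j) \<le> j"
proof (induction m arbitrary: j)
  case (Suc m)
  show ?case
  proof (cases j)
    case (Suc j')
    have "degree ([:a m, 1:] * esym (\<lambda>i. [:a i, 1:]) m j') \<le> Suc j'"
      using degree_mult_le[of "[:a m, 1:]" "esym (\<lambda>i. [:a i, 1:]) m j'"] Suc.IH[of j']
      by (simp del: mult_pCons_left)
    then show ?thesis using Suc Suc.IH[of j] by (simp add: degree_add_le del: mult_pCons_left)
  qed simp
qed simp

lemma coeff_esym_top: "coeff (esym (\<lambda>i. [:a i, 1:]) m d) d = of_nat (m choose d)"
proof (induction m arbitrary: d)
  case 0
  then show ?case by (cases d) auto
next
  case (Suc m)
  show ?case
  proof (cases d)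
    case (Suc d')
    have "coeff (esym (\<lambda>i. [:a i, 1:]) m d') (Suc d') = 0"
      using degree_esym_le[of a m d'] by (simp add: coeff_eq_0)
    then show ?thesis using Suc.IH Suc by simp
  qed simp
qed

lemma degree_esym:
  assumes "d \<le> m"
  shows "degree (esym (\<lambda>i. [:a i, 1:] :: 'a::{comm_ring_1,ring_char_0} poly) m d) = d"
proof -
  have "coeff (esym (\<lambda>i. [:a i, 1:] :: 'a poly) m d) d \<noteq> 0"
    using assms by (simp add: coeff_esym_top)
  then show ?thesis using degree_esym_le[of a m d] by (simp add: le_antisym le_degree)
qed

section \<open>Real-rootedness\<close>

lemma Im_mult_cnj_linear_step:
  fixes a D Q :: complex
  shows "Im ((a * D + Q) * cnj (a * Q)) = (cmod a)\<^sup>2 * Im (D * cnj Q) - (cmod Q)\<^sup>2 * Im a"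
proof -
  have "(a * D + Q) * cnj (a * Q) = (a * cnj a) * (D * cnj Q) + (Q * cnj Q) * cnj a"
    by (simp add: algebra_simps)
  also have "\<dots> = of_real ((cmod a)\<^sup>2) * (D * cnj Q) + of_real ((cmod Q)\<^sup>2) * cnj a"
    by (simp only: complex_norm_square)
  finally show ?thesis by simp
qed

text \<open>For a monic polynomial q with only real roots and t off the real axis,
  q'(t)/q(t) is the sum of the 1/(t - z), whose imaginary parts all have the sign of -Im t.\<close>

lemma Im_pderiv_linear_prod:
  fixes R :: "complex multiset"
  assumes "\<forall>z\<in>#R. z \<in> \<real>" and "t \<notin> \<real>"
  shows "Im (poly (pderiv (\<Prod>z\<in>#R. [:-z, 1:])) t * cnj (poly (\<Prod>z\<in>#R. [:-z, 1:]) t)) * Im t \<le> 0 \<and>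
    (R \<noteq> {#} \<longrightarrow> Im (poly (pderiv (\<Prod>z\<in>#R. [:-z, 1:])) t * cnj (poly (\<Prod>z\<in>#R. [:-z, 1:]) t)) * Im t < 0)"
  using assms(1)
proof (induction R)
  case (add z R)
  define Q where "Q = poly (\<Prod>z\<in>#R. [:-z, 1:]) t"
  define D where "D = poly (pderiv (\<Prod>z\<in>#R. [:-z, 1:])) t"
  define a where "a = t - z"
  have IH: "Im (D * cnj Q) * Im t \<le> 0" using add unfolding D_def Q_def by simp
  have "Im a = Im t" using add.prems unfolding a_def by (auto elim: Reals_cases)
  have "Q \<noteq> 0"
    using add.prems assms(2) unfolding Q_def by (auto simp: poly_prod_mset prod_mset_zero_iff)
  moreover have "Im t \<noteq> 0" using assms(2) complex_is_Real_iff by blast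
  ultimately have "(cmod Q)\<^sup>2 * (Im t)\<^sup>2 > 0" by simp
  moreover have "(cmod a)\<^sup>2 * (Im (D * cnj Q) * Im t) \<le> 0"
    using IH by (simp add: mult_nonneg_nonpos)
  moreover have "Im ((a * D + Q) * cnj (a * Q)) * Im t =
      (cmod a)\<^sup>2 * (Im (D * cnj Q) * Im t) - (cmod Q)\<^sup>2 * (Im t)\<^sup>2"
    unfolding Im_mult_cnj_linear_step \<open>Im a = Im t\<close> by (simp only: algebra_simps power2_eq_square)
  ultimately have "Im ((a * D + Q) * cnj (a * Q)) * Im t < 0" by linarith
  moreover have "poly (\<Prod>z\<in>#add_mset z R. [:-z, 1:]) t = a * Q"
    unfolding a_def Q_def by (simp add: algebra_simps)
  moreover have "poly (pderiv (\<Prod>z\<in>#add_mset z R. [:-z, 1:])) t = a * D + Q"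
    using pderiv_pCons[of "-z" "[:1:]"] unfolding a_def Q_def D_def by (simp add: pderiv_mult algebra_simps del: mult_pCons_left)
  ultimately show ?case by simp
qed simp

lemma pderiv_real_rooted:
  fixes p :: "complex poly"
  assumes "\<forall>z. poly p z = 0 \<longrightarrow> z \<in> \<real>" and "degree p \<ge> 1"
  shows "\<forall>z. poly (pderiv p) z = 0 \<longrightarrow> z \<in> \<real>"
proof (intro allI impI)
  fix t assume t: "poly (pderiv p) t = 0"
  show "t \<in> \<real>"
  proof (rule ccontr)
    assume "t \<notin> \<real>"
    let ?q = "\<Prod>z\<in>#proots p. [:-z, 1:]"
    have "p \<noteq> 0" using assms(2) by auto
    then have "\<forall>z\<in>#proots p. z \<in> \<real>" using assms(1) by simp
    moreover have "proots p \<noteq> {#}" using size_proots_complex[of p] assms(2) by auto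
    ultimately have "Im (poly (pderiv ?q) t * cnj (poly ?q t)) * Im t < 0"
      using Im_pderiv_linear_prod[OF _ \<open>t \<notin> \<real>\<close>] by blast
    moreover have "poly (pderiv p) t = lead_coeff p * poly (pderiv ?q) t"
      by (subst complex_poly_decompose_multiset[symmetric]) (simp add: pderiv_smult)
    then have "poly (pderiv ?q) t = 0" using t \<open>p \<noteq> 0\<close> by simp
    ultimately show False by simp
  qed
qed

text \<open>Up to a constant factor, e_d(t - x) is the (m - d)-th derivative of the product of the
  t - x i, and differentiation preserves real-rootedness.\<close>

lemma esym_real_rooted:
  fixes x :: "nat \<Rightarrow> complex"
  assumes "\<forall>i<m. x i \<in> \<real>" and "d \<le> m"
  shows "\<forall>z. poly (esym (\<lambda>i. [:-x i, 1:]) m d) z = 0 \<longrightarrow> z \<in> \<real>"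
proof -
  have "\<forall>z. poly (esym (\<lambda>i. [:-x i, 1:]) m (m - r)) z = 0 \<longrightarrow> z \<in> \<real>" if "r \<le> m" for r
    using that
  proof (induction r)
    case 0
    show ?case using assms(1) by (auto simp: esym_top poly_prod)
  next
    case (Suc r)
    let ?P = "esym (\<lambda>i. [:-x i, 1:]) m (m - r)"
    have "degree ?P = m - r" using degree_esym[of "m - r" m "\<lambda>i. - x i"] by simp
    then have "\<forall>z. poly (pderiv ?P) z = 0 \<longrightarrow> z \<in> \<real>"
      using pderiv_real_rooted Suc by simp
    moreover have "m - r = Suc (m - Suc r)" using Suc.prems by simp
    then have "pderiv ?P = of_nat (Suc r) * esym (\<lambda>i. [:-x i, 1:]) m (m - Suc r)"
      using pderiv_esym[of "\<lambda>i. - x i" m "m - Suc r"] Suc.prems by simp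
    ultimately show ?case by (auto simp del: of_nat_Suc)
  qed
  from this[of "m - d"] assms(2) show ?thesis by simp
qed

section \<open>The elementary symmetric polynomial as a hyperbolic polynomial\<close>

definition has_eigs ::
  "nat \<Rightarrow> nat \<Rightarrow> ((nat \<Rightarrow> nat) \<Rightarrow> real) \<Rightarrow> (nat \<Rightarrow> real) \<Rightarrow> (nat \<Rightarrow> real) \<Rightarrow> real multiset \<Rightarrow> bool"
  where "has_eigs n d c e x L \<longleftrightarrow> size L = d \<and>
    (\<forall>t. peval n c (\<lambda>i. t * e i - x i) = peval n c e * (\<Prod>l\<in>#L. t - l))"

lemma linear_prod_mset_inject:
  fixes L L' :: "'a::{idom,ring_char_0} multiset"
  assumes "\<And>t. (\<Prod>l\<in>#L. t - l) = (\<Prod>l\<in>#L'. t - l)"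
  shows "L = L'"
proof -
  have proots: "proots (\<Prod>l\<in>#M. [:-l, 1:]) = M" for M :: "'a multiset"
  proof (induction M)
    case (add x M)
    have "(\<Prod>l\<in>#M. [:-l, 1:]) \<noteq> 0"
      by (induction M) (simp_all del: mult_pCons_left)
    with add show ?case by (simp add: proots_mult del: mult_pCons_left)
  qed simp
  have "poly (\<Prod>l\<in>#L. [:-l, 1:]) = poly (\<Prod>l\<in>#L'. [:-l, 1:])"
    using assms by (simp add: poly_prod_mset fun_eq_iff)
  then show ?thesis by (metis proots poly_eq_poly_eq_iff)
qed

lemma eigs_eqI:
  assumes "peval n c e \<noteq> (0::real)" and "has_eigs n d c e x L"
  shows "eigs n d c e x = L"
  unfolding eigs_def
proof (rule the_equality)
  show "size L = d \<and> (\<forall>t. peval n c (\<lambda>i. t * e i - x i) = peval n c e * (\<Prod>l\<in>#L. t - l))"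
    using assms(2) unfolding has_eigs_def .
next
  fix L' assume L': "size L' = d \<and> (\<forall>t. peval n c (\<lambda>i. t * e i - x i) = peval n c e * (\<Prod>l\<in>#L'. t - l))"
  show "L' = L"
  proof (rule linear_prod_mset_inject)
    fix t
    have "peval n c e * (\<Prod>l\<in>#L'. t - l) = peval n c (\<lambda>i. t * e i - x i)"
      using L' by simp
    also have "\<dots> = peval n c e * (\<Prod>l\<in>#L. t - l)"
      using assms(2) by (simp add: has_eigs_def)
    finally have "peval n c e * (\<Prod>l\<in>#L'. t - l) = peval n c e * (\<Prod>l\<in>#L. t - l)" .
    then show "(\<Prod>l\<in>#L'. t - l) = (\<Prod>l\<in>#L. t - l)" using assms(1) by simp
  qed
qed

text \<open>The exponent vectors of the squarefree monomials of degree d are the indicator vectors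
  of the d-subsets.\<close>

definition esym_coeffs :: "nat \<Rightarrow> nat \<Rightarrow> (nat \<Rightarrow> nat) \<Rightarrow> real" where
  "esym_coeffs m d \<alpha> = of_bool (\<alpha> \<in> (\<lambda>T i. of_bool (i \<in> T)) ` {T. T \<subseteq> {..<m} \<and> card T = d})"

lemma esym_coeffs_support:
  "{\<alpha>. esym_coeffs m d \<alpha> \<noteq> 0} = (\<lambda>T i. of_bool (i \<in> T)) ` {T. T \<subseteq> {..<m} \<and> card T = d}"
  by (simp add: esym_coeffs_def)

lemma hom_poly_esym_coeffs: "hom_poly m d (esym_coeffs m d)"
proof -
  have "finite {T. T \<subseteq> {..<m} \<and> card T = d}"
    by (rule finite_subset[of _ "Pow {..<m}"]) auto
  moreover have "(\<forall>i\<ge>m. \<alpha> i = 0) \<and> (\<Sum>i<m. \<alpha> i) = d" if "esym_coeffs m d \<alpha> \<noteq> 0" for \<alpha>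
  proof -
    have "\<alpha> \<in> (\<lambda>T i. of_bool (i \<in> T)) ` {T. T \<subseteq> {..<m} \<and> card T = d}"
      using that by (simp flip: esym_coeffs_support)
    then obtain T where T: "T \<subseteq> {..<m}" "card T = d" "\<alpha> = (\<lambda>i. of_bool (i \<in> T))"
      by blast
    have "\<forall>i\<ge>m. \<alpha> i = 0" using T(1) unfolding T(3) by auto
    moreover have "(\<Sum>i<m. \<alpha> i) = d" using T unfolding T(3) by (simp add: Int_absorb1 Int_absorb2)
    ultimately show ?thesis ..
  qed
  ultimately show ?thesis unfolding hom_poly_def esym_coeffs_support by auto
qed

lemma peval_esym_coeffs: "peval m (esym_coeffs m d) x = esym x m d"
proof -
  let ?S = "{T. T \<subseteq> {..<m} \<and> card T = d}"
  have "inj_on (\<lambda>T i. of_bool (i \<in> T) :: nat) ?S"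
    by (auto simp: inj_on_def fun_eq_iff)
  then have "peval m (esym_coeffs m d) x = (\<Sum>T\<in>?S. \<Prod>i<m. x i ^ of_bool (i \<in> T))"
    unfolding peval_def esym_coeffs_support by (simp add: sum.reindex esym_coeffs_def)
  also have "\<dots> = (\<Sum>T\<in>?S. \<Prod>i\<in>T. x i)"
  proof (rule sum.cong)
    fix T assume "T \<in> ?S"
    then show "(\<Prod>i<m. x i ^ of_bool (i \<in> T)) = (\<Prod>i\<in>T. x i)"
      by (simp add: prod.If_cases Int_absorb1 of_bool_def if_distrib[of "\<lambda>k. x _ ^ k"])
  qed simp
  finally show ?thesis by (simp add: esym_eq_sum_subsets)
qed

lemma peval_esym_coeffs_shift:
  assumes "\<And>i. i < m \<Longrightarrow> f i = 1"
  shows "peval m (esym_coeffs m d) (\<lambda>i. t * f i - y i) = esym (\<lambda>i. t - y i) m d"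
  unfolding peval_esym_coeffs using assms by (intro esym_cong) simp

lemma peval_esym_coeffs_ones: "peval m (esym_coeffs m d) (indicator {..<m}) = real (m choose d)"
  using peval_esym_coeffs_shift[of m "indicator {..<m}" d 1 "\<lambda>_. 0"] by (simp add: esym_const)

lemma hyperbolic_esym:
  assumes "d \<le> m"
  shows "hyperbolic m d (esym_coeffs m d) (indicator {..<m})"
  unfolding hyperbolic_def
proof (intro conjI ballI allI impI)
  fix x :: "nat \<Rightarrow> real" and t :: complex
  assume "peval m (esym_coeffs m d)
    (\<lambda>i. t * complex_of_real (indicator {..<m} i) - complex_of_real (x i)) = 0"
  then have "poly (esym (\<lambda>i. [:-complex_of_real (x i), 1:]) m d) t = 0"
    by (subst (asm) peval_esym_coeffs_shift) (simp_all add: poly_esym)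
  then show "t \<in> \<real>" using esym_real_rooted[of m "\<lambda>i. complex_of_real (x i)" d] assms by auto
qed (use assms in \<open>simp_all add: hom_poly_esym_coeffs vecs_def peval_esym_coeffs_ones\<close>)

lemma of_real_prod_mset:
  "of_real (\<Prod>z\<in>#M. f z) = (\<Prod>z\<in>#M. (of_real (f z) :: 'a::{real_algebra_1,comm_ring_1}))"
  by (induction M) auto

lemma esym_has_eigs:
  assumes "d \<le> m"
  shows "\<exists>L. has_eigs m d (esym_coeffs m d) (indicator {..<m}) x L"
proof -
  let ?P = "esym (\<lambda>i. [:-complex_of_real (x i), 1:]) m d"
  define R where "R = proots ?P"
  have deg: "degree ?P = d"
    using degree_esym[OF assms, of "\<lambda>i. - complex_of_real (x i)"] by simp
  then have lc: "lead_coeff ?P = of_nat (m choose d)"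
    using coeff_esym_top[of "\<lambda>i. - complex_of_real (x i)" m d] by simp
  then have "?P \<noteq> 0" using assms by (auto simp: binomial_eq_0_iff)
  then have real: "\<forall>z\<in>#R. z \<in> \<real>"
    using esym_real_rooted[of m "\<lambda>i. complex_of_real (x i)" d] assms unfolding R_def by simp
  have dec: "?P = smult (of_nat (m choose d)) (\<Prod>z\<in>#R. [:-z, 1:])"
    using complex_poly_decompose_multiset[of ?P] lc unfolding R_def by simp
  define L where "L = image_mset Re R"
  have "size L = d" unfolding L_def R_def using size_proots_complex[of ?P] deg by simp
  moreover have "peval m (esym_coeffs m d) (\<lambda>i. t * indicator {..<m} i - x i) =
      real (m choose d) * (\<Prod>l\<in>#L. t - l)" for t
  proof -
    have "complex_of_real (peval m (esym_coeffs m d) (\<lambda>i. t * indicator {..<m} i - x i)) =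
        esym (\<lambda>i. complex_of_real (t - x i)) m d"
      by (simp add: peval_esym_coeffs_shift flip: esym_of_real)
    also have "\<dots> = poly ?P (complex_of_real t)" by (simp add: poly_esym)
    also have "\<dots> = of_nat (m choose d) * (\<Prod>z\<in>#R. complex_of_real t - z)"
      by (subst dec) (simp add: poly_prod_mset)
    also have "(\<Prod>z\<in>#R. complex_of_real t - z) = (\<Prod>z\<in>#R. complex_of_real (t - Re z))"
      using real by (intro arg_cong[where f = prod_mset] image_mset_cong) (auto elim!: Reals_cases)
    also have "\<dots> = complex_of_real (\<Prod>l\<in>#L. t - l)"
      by (simp add: L_def of_real_prod_mset multiset.map_comp comp_def)
    also have "of_nat (m choose d) * \<dots> = complex_of_real (real (m choose d) * (\<Prod>l\<in>#L. t - l))"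
      by simp
    finally show ?thesis by (simp only: of_real_eq_iff)
  qed
  ultimately show ?thesis by (auto simp: has_eigs_def peval_esym_coeffs_ones)
qed

lemma esym_two_valued:
  assumes "P \<subseteq> {..<m}"
  shows "esym (\<lambda>i. if i \<in> P then a else b) m j = coeff ([:1, a:] ^ card P * [:1, b:] ^ (m - card P)) j"
proof -
  have "(\<Prod>i<m. [:1, if i \<in> P then a else b:]) = [:1, a:] ^ card P * [:1, b:] ^ card ({..<m} - P)"
    using assms by (simp add: if_distrib[of "\<lambda>c. [:1, c:]"] prod.If_cases Int_absorb1 Diff_eq)
  moreover have "card ({..<m} - P) = m - card P"
    using assms by (simp add: card_Diff_subset finite_subset)
  ultimately show ?thesis by (simp add: esym_eq_coeff_prod)
qed

lemma esym_coordinate: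
  assumes "i0 < m" "1 \<le> d" "d \<le> m"
  shows "esym (\<lambda>i. t - indicator {i0} i) m d = real (m choose d) * ((t - real d / real m) * t ^ (d - 1))"
proof -
  obtain d' where d': "d = Suc d'" using assms(2) by (cases d) auto
  obtain m' where m': "m = Suc m'" using assms(1) by (cases m) auto
  have binom: "coeff ([:1, b:] ^ n) j = of_nat (n choose j) * b ^ j" for b :: real and n j
    using esym_eq_coeff_prod[of "\<lambda>_. b" n j] by (simp add: esym_const)
  have "esym (\<lambda>i. t - indicator {i0} i) m d = esym (\<lambda>i. if i \<in> {i0} then t - 1 else t) m d"
    by (rule esym_cong) simp
  also have "\<dots> = coeff ([:1, t - 1:] * [:1, t:] ^ m') (Suc d')"
    using esym_two_valued[of "{i0}" m "t - 1" t d] assms m' d' by simp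
  also have "\<dots> = real (m' choose Suc d') * t ^ Suc d' + (t - 1) * (real (m' choose d') * t ^ d')"
    by (simp add: binom)
  also have "\<dots> = real (m choose d) * ((t - real d / real m) * t ^ (d - 1))"
  proof -
    have "real m * real (m' choose d') = real d * real (m choose d)"
      unfolding m' d' by (metis Suc_times_binomial of_nat_mult)
    then have c0: "real d * real (m choose d) / real m = real (m' choose d')"
      using assms by (simp add: field_simps)
    have "real (m choose d) * ((t - real d / real m) * t ^ (d - 1)) =
        real (m choose d) * t ^ Suc d' - (real d * real (m choose d) / real m) * t ^ d'"
      unfolding d' by (simp add: algebra_simps)
    moreover have "real (m choose d) = real (m' choose Suc d') + real (m' choose d')"
      unfolding m' d' by simp
    ultimately show ?thesis unfolding c0 by (simp add: algebra_simps)
  qed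
  finally show ?thesis .
qed

lemma eigs_esym_coordinate:
  assumes "i0 < m" "1 \<le> d" "d \<le> m"
  shows "eigs m d (esym_coeffs m d) (indicator {..<m}) (indicator {i0}) =
    add_mset (real d / real m) (replicate_mset (d - 1) 0)"
proof (rule eigs_eqI)
  show "peval m (esym_coeffs m d) (indicator {..<m}) \<noteq> (0::real)"
    using assms by (simp add: peval_esym_coeffs_ones binomial_eq_0_iff)
  show "has_eigs m d (esym_coeffs m d) (indicator {..<m}) (indicator {i0})
      (add_mset (real d / real m) (replicate_mset (d - 1) 0))"
    using assms
    by (simp add: has_eigs_def peval_esym_coeffs_shift esym_coordinate peval_esym_coeffs_ones)
qed

lemma coeff_prod_mset_linear_nonneg:
  assumes "\<forall>l\<in>#L. 0 \<le> f l"
  shows "0 \<le> coeff (\<Prod>l\<in>#L. [:f l, 1:] :: real poly) j"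
  using assms
proof (induction L arbitrary: j)
  case empty
  then show ?case by (cases j) auto
next
  case (add x L)
  then show ?case by (cases j) auto
qed

lemma coeff_esym_linear_nonneg_downward:
  fixes a :: "nat \<Rightarrow> real"
  assumes "\<forall>j. 0 \<le> coeff (esym (\<lambda>i. [:a i, 1:]) m d) j" and "n \<le> d" and "d \<le> m"
  shows "0 \<le> coeff (esym (\<lambda>i. [:a i, 1:]) m n) j"
proof -
  have "\<forall>j. 0 \<le> coeff (esym (\<lambda>i. [:a i, 1:]) m (d - r)) j" if "r \<le> d" for r
    using that
  proof (induction r)
    case (Suc r)
    then obtain k where k: "d - r = Suc k" "d - Suc r = k" by (metis Suc_diff_Suc Suc_le_lessD)
    have "0 \<le> coeff (pderiv (esym (\<lambda>i. [:a i, 1:]) m (Suc k))) j" for j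
      using Suc k by (simp add: coeff_pderiv)
    then have "0 \<le> real (m - k) * coeff (esym (\<lambda>i. [:a i, 1:]) m k) j" for j
      by (simp add: pderiv_esym of_nat_mult_conv_smult)
    moreover have "m - k > 0" using k Suc.prems assms(3) by linarith
    ultimately show ?case using k by (simp add: zero_le_mult_iff)
  qed (use assms(1) in simp)
  from this[of "d - n"] assms(2) show ?thesis by simp
qed

text \<open>If every eigenvalue of x is at most \<beta>, then t \<mapsto> e_d(t - x) has only nonnegative
  coefficients when expanded around \<beta>, and so do its derivatives, which are multiples of the
  lower e_n(t - x); at t = \<beta> this gives the sign condition.\<close>

lemma esym_nonneg_above_eigs:
  assumes "d \<le> m" and "has_eigs m d (esym_coeffs m d) (indicator {..<m}) x L"
    and "\<forall>l\<in>#L. l \<le> \<beta>" and "n \<le> d"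
  shows "0 \<le> esym (\<lambda>i. \<beta> - x i) m n"
proof -
  have "poly (esym (\<lambda>i. [:\<beta> - x i, 1:]) m d) y =
      poly (smult (real (m choose d)) (\<Prod>l\<in>#L. [:\<beta> - l, 1:])) y" for y
  proof -
    have "poly (esym (\<lambda>i. [:\<beta> - x i, 1:]) m d) y = esym (\<lambda>i. (\<beta> + y) - x i) m d"
      by (simp add: poly_esym algebra_simps)
    also have "\<dots> = peval m (esym_coeffs m d) (\<lambda>i. (\<beta> + y) * indicator {..<m} i - x i)"
      by (rule peval_esym_coeffs_shift[symmetric]) simp
    also have "\<dots> = real (m choose d) * (\<Prod>l\<in>#L. \<beta> + y - l)"
      using assms(2) by (simp add: has_eigs_def peval_esym_coeffs_ones)
    finally show ?thesis by (simp add: poly_prod_mset algebra_simps)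
  qed
  then have "esym (\<lambda>i. [:\<beta> - x i, 1:]) m d = smult (real (m choose d)) (\<Prod>l\<in>#L. [:\<beta> - l, 1:])"
    by (simp add: poly_eq_poly_eq_iff[symmetric] fun_eq_iff)
  then have "\<forall>j. 0 \<le> coeff (esym (\<lambda>i. [:\<beta> - x i, 1:]) m d) j"
    using coeff_prod_mset_linear_nonneg[of L "\<lambda>l. \<beta> - l"] assms(3) by simp
  then have "0 \<le> coeff (esym (\<lambda>i. [:\<beta> - x i, 1:]) m n) 0"
    by (rule coeff_esym_linear_nonneg_downward[OF _ assms(4,1)])
  then show ?thesis by (simp add: poly_esym flip: poly_0_coeff_0)
qed

section \<open>A three-term recurrence and its sign changes\<close>

lemma pderiv_power_mult_self: "pderiv (p ^ n) * p = smult (of_nat n) (p ^ n) * pderiv (p::'a::idom poly)"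
proof (cases n)
  case (Suc k)
  have "pderiv (p ^ Suc k) * p = smult (of_nat (Suc k)) (p ^ k * p) * pderiv p"
    by (simp only: pderiv_power_Suc mult_smult_left mult_smult_right mult_ac)
  then show ?thesis using Suc by (simp only: power_Suc2)
qed simp

text \<open>The generating polynomial (1 + (\<beta> - 1) t)^s (1 + \<beta> t)^r satisfies a first order linear
  differential equation, which turns into a three-term recurrence for its coefficients.\<close>

lemma binomial_product_ode:
  fixes \<beta> :: real
  defines "p \<equiv> [:1, \<beta> - 1:]" and "q \<equiv> [:1, \<beta>:]"
  shows "[:1, 2*\<beta> - 1, \<beta>*(\<beta> - 1):] * pderiv (p ^ s * q ^ r) =
    [:real s * (\<beta> - 1) + real r * \<beta>, real (s + r) * \<beta> * (\<beta> - 1):] * (p ^ s * q ^ r)"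
proof -
  have const: "[:a:] * f = smult a f" for a :: real and f by simp
  have "pderiv (p ^ s) * p = smult (real s * (\<beta> - 1)) (p ^ s)"
    unfolding pderiv_power_mult_self by (simp add: p_def pderiv_pCons const mult.commute del: mult_pCons_left)
  moreover have "pderiv (q ^ r) * q = smult (real r * \<beta>) (q ^ r)"
    unfolding pderiv_power_mult_self by (simp add: q_def pderiv_pCons const mult.commute del: mult_pCons_left)
  moreover have "p * q * pderiv (p ^ s * q ^ r) =
      p ^ s * (pderiv (q ^ r) * q) * p + q ^ r * (pderiv (p ^ s) * p) * q"
    by (simp only: pderiv_mult distrib_left mult_ac)
  ultimately have "p * q * pderiv (p ^ s * q ^ r) =
      p ^ s * q ^ r * (smult (real r * \<beta>) p + smult (real s * (\<beta> - 1)) q)"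
    by (simp only: mult_smult_left mult_smult_right smult_add_right distrib_left mult_ac)
  moreover have "smult (real r * \<beta>) p + smult (real s * (\<beta> - 1)) q =
      [:real s * (\<beta> - 1) + real r * \<beta>, real (s + r) * \<beta> * (\<beta> - 1):]"
    unfolding p_def q_def by (simp add: algebra_simps)
  moreover have "[:1, 2*\<beta> - 1, \<beta>*(\<beta> - 1):] = p * q"
    unfolding p_def q_def by (simp add: algebra_simps)
  ultimately show ?thesis by (simp only: mult_ac)
qed

lemma coeff_binomial_product_recurrence:
  fixes \<beta> :: real
  assumes "s \<le> m" and "1 \<le> n"
  defines "c \<equiv> \<lambda>j. coeff ([:1, \<beta> - 1:] ^ s * [:1, \<beta>:] ^ (m - s)) j"
  shows "real (n + 1) * c (n + 1) = (real m * \<beta> - real s - real n * (2*\<beta> - 1)) * c n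
    - \<beta> * (1 - \<beta>) * (real m - real n + 1) * c (n - 1)"
proof -
  obtain k where k: "n = Suc k" using assms(2) by (cases n) auto
  let ?G = "[:1, \<beta> - 1:] ^ s * [:1, \<beta>:] ^ (m - s)"
  have "coeff ([:1, 2*\<beta> - 1, \<beta>*(\<beta> - 1):] * pderiv ?G) (Suc k) =
      coeff ([:real s * (\<beta> - 1) + real (m - s) * \<beta>, real (s + (m - s)) * \<beta> * (\<beta> - 1):] * ?G) (Suc k)"
    by (simp only: binomial_product_ode)
  then have "real (k + 2) * c (k + 2) + (2*\<beta> - 1) * (real (k + 1) * c (k + 1)) + \<beta>*(\<beta> - 1) * (real k * c k)
      = (real s * (\<beta> - 1) + real (m - s) * \<beta>) * c (k + 1) + real m * \<beta> * (\<beta> - 1) * c k"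
    using assms(1) unfolding c_def by (cases k) (simp_all add: coeff_pderiv algebra_simps)
  moreover have "real (m - s) = real m - real s" using assms(1) by simp
  ultimately show ?thesis unfolding k by (simp add: algebra_simps)
qed

lemma recurrence_positive:
  fixes c A B :: "nat \<Rightarrow> real"
  assumes "c 0 > 0"
    and rec: "\<And>n. 1 \<le> n \<Longrightarrow> n < d \<Longrightarrow> real (n + 1) * c (n + 1) = A n * c n - B n * c (n - 1)"
    and B_pos: "\<And>n. 1 \<le> n \<Longrightarrow> n < d \<Longrightarrow> B n > 0"
    and nonneg: "\<And>n. n \<le> d \<Longrightarrow> c n \<ge> 0"
    and "n < d"
  shows "c n > 0"
  using \<open>n < d\<close>
proof (induction n)
  case (Suc n)
  show ?case
  proof (rule ccontr)
    assume "\<not> c (Suc n) > 0"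
    then have "c (Suc n) = 0" using nonneg[of "Suc n"] Suc.prems by simp
    then have "real (Suc n + 1) * c (Suc n + 1) = - B (Suc n) * c n"
      using rec[of "Suc n"] Suc.prems by simp
    moreover have "B (Suc n) * c n > 0" using B_pos[of "Suc n"] Suc by simp
    moreover have "real (Suc n + 1) * c (Suc n + 1) \<ge> 0"
      using nonneg[of "Suc n + 1"] Suc.prems by simp
    ultimately show False by linarith
  qed
qed (use assms(1) in simp)

lemma ratio_step_bound:
  fixes A B N r \<delta> :: real
  assumes "r > 0" "N > 0" "B > 0" and "A + N * \<delta> \<le> 2 * sqrt (N * B)"
  shows "(A - B / r) / N \<le> r - \<delta>"
proof -
  have "N * B = (N * r) * (B / r)" using assms(1) by simp
  then have "2 * sqrt (N * B) \<le> N * r + B / r"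
    using arith_geo_mean_sqrt[of "N * r" "B / r"] assms(1-3) by simp
  then have "A - B / r \<le> N * (r - \<delta>)" using assms(4) by (simp add: algebra_simps)
  then show ?thesis using assms(2) by (simp add: divide_le_eq mult.commute)
qed

text \<open>If the recurrence has no positive fixed point on a window of indices, the ratios
  c (n + 1) / c n drop by \<delta> at each step and become negative, so c cannot stay positive.\<close>

lemma three_term_recurrence_sign_change:
  fixes c A B :: "nat \<Rightarrow> real"
  assumes "c 0 > 0"
    and rec: "\<And>n. 1 \<le> n \<Longrightarrow> n < d \<Longrightarrow> real (n + 1) * c (n + 1) = A n * c n - B n * c (n - 1)"
    and B_pos: "\<And>n. 1 \<le> n \<Longrightarrow> n < d \<Longrightarrow> B n > 0"
    and window: "1 \<le> a" "a + L < d"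
    and start: "A a < real (a + 1) * (real L * \<delta>)"
    and step: "\<And>n. a < n \<Longrightarrow> n \<le> a + L \<Longrightarrow> A n + real (n + 1) * \<delta> \<le> 2 * sqrt (real (n + 1) * B n)"
  shows "\<exists>n\<le>d. c n < 0"
proof (rule ccontr)
  assume "\<not> (\<exists>n\<le>d. c n < 0)"
  then have pos: "c n > 0" if "n < d" for n
    using recurrence_positive[OF assms(1) rec B_pos _ that] by (meson not_le)
  define \<rho> where "\<rho> n = c n / c (n - 1)" for n
  have ratio_rec: "\<rho> (n + 1) = (A n - B n / \<rho> n) / real (n + 1)" if "1 \<le> n" "n < d" for n
  proof -
    have cn: "c n > 0" "c (n - 1) > 0" using pos that by auto
    then have "A n - B n / \<rho> n = (A n * c n - B n * c (n - 1)) / c n"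
      by (simp add: \<rho>_def field_simps)
    also have "\<dots> = real (n + 1) * c (n + 1) / c n" using rec[OF that] by simp
    finally show ?thesis using cn by (simp add: \<rho>_def)
  qed
  have "c a > 0" "c (a - 1) > 0" using pos window by auto
  then have "real (a + 1) * c (a + 1) < A a * c a" using rec[of a] B_pos[of a] window by simp
  then have "\<rho> (a + 1) < A a / real (a + 1)" using \<open>c a > 0\<close> by (simp add: \<rho>_def field_simps)
  then have "\<rho> (a + 1 + i) < A a / real (a + 1) - real i * \<delta>" if "i \<le> L" for i
    using that
  proof (induction i)
    case (Suc i)
    have "\<rho> (a + 1 + i) > 0" using pos[of "a + 1 + i"] pos[of "a + i"] Suc.prems window
      by (simp add: \<rho>_def)
    then have "\<rho> (a + 1 + i + 1) \<le> \<rho> (a + 1 + i) - \<delta>"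
      using ratio_rec[of "a + 1 + i"] ratio_step_bound step[of "a + 1 + i"] B_pos[of "a + 1 + i"]
        Suc.prems window by simp
    then show ?case using Suc by (simp add: algebra_simps)
  qed simp
  from this[of L] have "\<rho> (a + 1 + L) < A a / real (a + 1) - real L * \<delta>" by simp
  moreover have "A a / real (a + 1) < real L * \<delta>" using start by (simp add: field_simps)
  ultimately have "\<rho> (a + 1 + L) < 0" by linarith
  moreover have "\<rho> (a + 1 + L) \<ge> 0"
    using \<open>\<not> (\<exists>n\<le>d. c n < 0)\<close> pos[of "a + L"] window by (simp add: \<rho>_def not_less)
  ultimately show False by simp
qed

text \<open>The oscillation margin of the limiting recurrence at \<nu> = n / m; when it is positive
  the characteristic quadratic of the recurrence has no real root.\<close>

definition osc_margin :: "real \<Rightarrow> real \<Rightarrow> real \<Rightarrow> real" where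
  "osc_margin \<beta> \<kappa> \<nu> = sqrt (4 * \<beta> * (1 - \<beta>) * \<nu> * (1 - \<nu>)) - (\<beta> - \<kappa> - \<nu> * (2 * \<beta> - 1))"

lemma recurrence_step_from_osc_margin:
  assumes "0 < \<beta>" "\<beta> < 1" "real m / real k \<le> real s" "n \<le> m" "1 \<le> m" "0 < \<delta>"
    and "2 * \<delta> < osc_margin \<beta> (1 / real k) (real n / real m)"
  shows "real m * \<beta> - real s - real n * (2 * \<beta> - 1) + real (n + 1) * \<delta>
    \<le> 2 * sqrt (real (n + 1) * (\<beta> * (1 - \<beta>) * (real m - real n + 1)))"
proof -
  define \<nu> where "\<nu> = real n / real m"
  have m_nu: "real m > 0" "real m * \<nu> = real n" using assms(5) by (simp_all add: \<nu>_def)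
  define X where "X = 4 * \<beta> * (1 - \<beta>) * \<nu> * (1 - \<nu>)"
  have "(real m)\<^sup>2 * X = 4 * (\<beta> * (1 - \<beta>) * ((real m * \<nu>) * (real m - real m * \<nu>)))"
    by (simp add: X_def power2_eq_square algebra_simps)
  moreover have "real m * sqrt X = sqrt ((real m)\<^sup>2 * X)" by (simp add: real_sqrt_mult)
  ultimately have "real m * sqrt X = sqrt (4 * (\<beta> * (1 - \<beta>) * (real n * (real m - real n))))"
    using m_nu(2) by simp
  also have "\<dots> = 2 * sqrt (\<beta> * (1 - \<beta>) * (real n * (real m - real n)))"
    by (simp add: real_sqrt_mult)
  also have "\<dots> \<le> 2 * sqrt (real (n + 1) * (\<beta> * (1 - \<beta>) * (real m - real n + 1)))"
  proof -
    have "real n * (real m - real n) \<le> real (n + 1) * (real m - real n + 1)"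
      by (simp add: algebra_simps)
    then have "\<beta> * (1 - \<beta>) * (real n * (real m - real n)) \<le>
        \<beta> * (1 - \<beta>) * (real (n + 1) * (real m - real n + 1))"
      using assms(1,2) by (intro mult_left_mono) simp_all
    then show ?thesis by (simp add: mult_ac)
  qed
  finally have sq: "real m * sqrt X \<le> \<dots>" .
  have "real m * (\<beta> - 1 / real k - \<nu> * (2 * \<beta> - 1)) =
      real m * \<beta> - real m / real k - real n * (2 * \<beta> - 1)"
    by (simp add: algebra_simps flip: m_nu(2))
  then have "real m * osc_margin \<beta> (1 / real k) \<nu> =
      real m * sqrt X - (real m * \<beta> - real m / real k - real n * (2 * \<beta> - 1))"
    unfolding osc_margin_def X_def[symmetric] by (simp add: right_diff_distrib)
  moreover have "real m * (2 * \<delta>) < real m * osc_margin \<beta> (1 / real k) \<nu>"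
    using assms(7) m_nu by (simp add: \<nu>_def)
  moreover have "real (n + 1) * \<delta> \<le> real m * (2 * \<delta>)" using assms(4-6) by simp
  ultimately show ?thesis using sq assms(3) by linarith
qed

section \<open>Choice of the parameters\<close>

text \<open>Positivity of the margin is a quadratic condition on \<beta>, satisfied strictly between
  the roots P - Q and P + Q.\<close>

lemma osc_margin_pos_between_roots:
  fixes \<beta> \<kappa> \<epsilon> :: real
  assumes "0 \<le> \<beta>" "\<beta> \<le> 1" "0 \<le> \<epsilon>" "\<epsilon> \<le> 1"
    and "\<bar>\<beta> - (\<epsilon> + \<kappa> - 2 * \<epsilon> * \<kappa>)\<bar> < sqrt (4 * \<kappa> * (1 - \<kappa>) * \<epsilon> * (1 - \<epsilon>))"
  shows "0 < osc_margin \<beta> \<kappa> \<epsilon>"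
proof -
  define g where "g = \<beta> - \<kappa> - \<epsilon> * (2 * \<beta> - 1)"
  have "0 \<le> 4 * \<beta> * (1 - \<beta>) * \<epsilon> * (1 - \<epsilon>)" using assms(1-4) by simp
  moreover have "g < sqrt (4 * \<beta> * (1 - \<beta>) * \<epsilon> * (1 - \<epsilon>))" if "0 \<le> g"
  proof (rule real_less_rsqrt)
    have "0 < sqrt (4 * \<kappa> * (1 - \<kappa>) * \<epsilon> * (1 - \<epsilon>))" using assms(5) by linarith
    then have "(\<beta> - (\<epsilon> + \<kappa> - 2 * \<epsilon> * \<kappa>))\<^sup>2 < 4 * \<kappa> * (1 - \<kappa>) * \<epsilon> * (1 - \<epsilon>)"
      using assms(5) by (metis abs_le_square_iff abs_of_pos less_le not_less real_less_rsqrt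
          real_sqrt_abs real_sqrt_less_iff)
    then show "g\<^sup>2 < 4 * \<beta> * (1 - \<beta>) * \<epsilon> * (1 - \<epsilon>)"
      unfolding g_def by (simp add: power2_eq_square algebra_simps)
  qed
  ultimately have "g < sqrt (4 * \<beta> * (1 - \<beta>) * \<epsilon> * (1 - \<epsilon>))"
    by (cases "0 \<le> g") (auto intro: order.strict_trans2[OF _ real_sqrt_ge_zero])
  then show ?thesis unfolding osc_margin_def g_def[symmetric] by simp
qed

lemma bound_eq_roots:
  assumes "k \<ge> 2" "0 \<le> \<epsilon>" "\<epsilon> \<le> 1"
  shows "1 / real k + \<epsilon> * (real k - 2) / real k + 2 * sqrt (real k - 1) / real k * sqrt (\<epsilon> - \<epsilon>\<^sup>2) =
    (\<epsilon> + 1 / real k - 2 * \<epsilon> * (1 / real k)) +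
    sqrt (4 * (1 / real k) * (1 - 1 / real k) * \<epsilon> * (1 - \<epsilon>))"
proof -
  have "4 * (1 / real k) * (1 - 1 / real k) * \<epsilon> * (1 - \<epsilon>) =
      (2 / real k)\<^sup>2 * ((real k - 1) * (\<epsilon> - \<epsilon>\<^sup>2))"
    using assms(1) by (simp add: field_simps power2_eq_square)
  then have "sqrt (4 * (1 / real k) * (1 - 1 / real k) * \<epsilon> * (1 - \<epsilon>)) =
      2 / real k * (sqrt (real k - 1) * sqrt (\<epsilon> - \<epsilon>\<^sup>2))"
    by (simp add: real_sqrt_mult)
  then show ?thesis using assms(1) by (simp add: field_simps)
qed

lemma exists_beta_osc_margin_pos:
  assumes "k \<ge> 2" "0 < \<epsilon>" "\<epsilon> \<le> 1 - 1 / real k"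
    and "B < 1 / real k + \<epsilon> * (real k - 2) / real k + 2 * sqrt (real k - 1) / real k * sqrt (\<epsilon> - \<epsilon>\<^sup>2)"
  obtains \<beta> where "B < \<beta>" "0 < \<beta>" "\<beta> < 1" "0 < osc_margin \<beta> (1 / real k) \<epsilon>"
proof -
  define \<kappa> where "\<kappa> = 1 / real k"
  define P where "P = \<epsilon> + \<kappa> - 2 * \<epsilon> * \<kappa>"
  define Q where "Q = sqrt (4 * \<kappa> * (1 - \<kappa>) * \<epsilon> * (1 - \<epsilon>))"
  have \<kappa>: "0 < \<kappa>" "\<kappa> < 1" using assms(1) by (auto simp: \<kappa>_def)
  have \<epsilon>: "0 < \<epsilon>" "\<epsilon> < 1" using assms(2,3) \<kappa> unfolding \<kappa>_def by linarith+
  have "B < P + Q"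
    using assms(4) bound_eq_roots[of k \<epsilon>] assms(1) \<epsilon> unfolding P_def Q_def \<kappa>_def by linarith
  define a where "a = (1 - \<epsilon>) * (1 - \<kappa>)"
  define b where "b = \<epsilon> * \<kappa>"
  have "0 < a" "0 < b" using \<kappa> \<epsilon> by (simp_all add: a_def b_def)
  have ab: "1 - P = a + b" by (simp add: P_def a_def b_def algebra_simps)
  have "0 \<le> 4 * \<kappa> * (1 - \<kappa>) * \<epsilon> * (1 - \<epsilon>)" using \<kappa> \<epsilon> by simp
  then have "Q\<^sup>2 = 4 * \<kappa> * (1 - \<kappa>) * \<epsilon> * (1 - \<epsilon>)" by (simp add: Q_def)
  also have "\<dots> = 4 * a * b" by (simp add: a_def b_def algebra_simps)
  finally have "Q\<^sup>2 = 4 * a * b" .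
  moreover have "(a + b)\<^sup>2 - 4 * a * b = (a - b)\<^sup>2" by (simp add: power2_eq_square algebra_simps)
  ultimately have "Q\<^sup>2 \<le> (1 - P)\<^sup>2" unfolding ab using zero_le_power2[of "a - b"] by linarith
  moreover have "0 \<le> 1 - P" using \<open>0 < a\<close> \<open>0 < b\<close> ab by linarith
  ultimately have "Q \<le> 1 - P" by (rule power2_le_imp_le)
  have "0 < 4 * \<kappa> * (1 - \<kappa>) * \<epsilon> * (1 - \<epsilon>)" using \<kappa> \<epsilon> by (intro mult_pos_pos) simp_all
  then have "0 < Q" by (simp add: Q_def)
  have "0 < \<epsilon> * (1 - \<kappa>)" "0 < \<kappa> * (1 - \<epsilon>)" using \<kappa> \<epsilon> by simp_all
  moreover have "P = \<epsilon> * (1 - \<kappa>) + \<kappa> * (1 - \<epsilon>)" by (simp add: P_def algebra_simps)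
  ultimately have "0 < P" by linarith
  define lo where "lo = max (max B (P - Q)) 0"
  define hi where "hi = min (P + Q) 1"
  have "lo < hi"
    unfolding lo_def hi_def using \<open>B < P + Q\<close> \<open>0 < Q\<close> \<open>Q \<le> 1 - P\<close> \<open>0 < P\<close> by auto
  define \<beta> where "\<beta> = (lo + hi) / 2"
  have "lo < \<beta>" "\<beta> < hi" using \<open>lo < hi\<close> by (simp_all add: \<beta>_def)
  then have \<beta>: "B < \<beta>" "P - Q < \<beta>" "0 < \<beta>" "\<beta> < P + Q" "\<beta> < 1" by (simp_all add: lo_def hi_def)
  have "0 < osc_margin \<beta> \<kappa> \<epsilon>"
    using \<beta> \<epsilon> by (intro osc_margin_pos_between_roots) (auto simp: P_def Q_def abs_less_iff)
  then show ?thesis using \<beta> by (intro that) (simp_all add: \<kappa>_def)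
qed

lemma osc_margin_near:
  assumes "0 < osc_margin \<beta> \<kappa> \<epsilon>"
  obtains \<eta> where "0 < \<eta>" "\<And>\<nu>. \<bar>\<nu> - \<epsilon>\<bar> < \<eta> \<Longrightarrow> osc_margin \<beta> \<kappa> \<epsilon> / 2 < osc_margin \<beta> \<kappa> \<nu>"
proof -
  have "isCont (\<lambda>\<nu>. osc_margin \<beta> \<kappa> \<nu>) \<epsilon>"
    unfolding osc_margin_def by (intro continuous_intros)
  then have "((\<lambda>\<nu>. osc_margin \<beta> \<kappa> \<nu>) \<longlongrightarrow> osc_margin \<beta> \<kappa> \<epsilon>) (nhds \<epsilon>)"
    by (simp add: isCont_def tendsto_at_iff_tendsto_nhds)
  moreover have "osc_margin \<beta> \<kappa> \<epsilon> / 2 < osc_margin \<beta> \<kappa> \<epsilon>" using assms by simp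
  ultimately have "eventually (\<lambda>\<nu>. osc_margin \<beta> \<kappa> \<epsilon> / 2 < osc_margin \<beta> \<kappa> \<nu>) (nhds \<epsilon>)"
    by (rule order_tendstoD(1))
  then show ?thesis using that by (auto simp: eventually_nhds_metric dist_real_def)
qed

text \<open>The condition on M + a makes the window long enough for the ratios of consecutive
  coefficients, which drop by \<delta> per step, to become negative.\<close>

lemma window_parameters:
  fixes \<epsilon> \<eta> \<delta> :: real
  assumes "0 < \<epsilon>" "\<epsilon> < 1" "0 < \<eta>" "0 < \<delta>"
  obtains M d a L :: nat where "d \<le> M" "real d \<le> \<epsilon> * real M" "1 \<le> a" "a + L < d"
    "real M + real a < real (a + 1) * (real L * \<delta>)"
    "\<And>n. a < n \<Longrightarrow> n \<le> a + L \<Longrightarrow> \<bar>real n / real M - \<epsilon>\<bar> < \<eta>"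
proof -
  obtain L :: nat where L: "(2 + 2 / \<epsilon>) / \<delta> \<le> real L" using real_arch_simple by blast
  obtain M :: nat where "max ((real L + 3) / \<eta>) ((2 * real L + 6) / \<epsilon>) < real M"
    using reals_Archimedean2 by blast
  then have "(real L + 3) / \<eta> < real M" "(2 * real L + 6) / \<epsilon> < real M" by simp_all
  then have M: "real L + 3 < \<eta> * real M" "2 * real L + 6 < \<epsilon> * real M"
    using assms(1,3) by (simp_all add: pos_divide_less_eq mult.commute)
  then have "0 < \<epsilon> * real M" by linarith
  then have "0 < real M" using assms(1) by (simp add: zero_less_mult_iff)
  define d where "d = nat \<lfloor>\<epsilon> * real M\<rfloor>"
  have d: "real d \<le> \<epsilon> * real M" "\<epsilon> * real M < real d + 1"
    using M(2) unfolding d_def by linarith+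
  define a where "a = d - L - 1"
  have a: "real a + 1 = real d - real L" "1 \<le> a" "a + L < d"
    using d M(2) unfolding a_def by linarith+
  show ?thesis
  proof (rule that[OF _ d(1) a(2,3)])
    have "\<epsilon> * real M < real M" using assms(2) \<open>0 < real M\<close> by simp
    then show "d \<le> M" using d(1) by simp
    have "\<epsilon> * real M \<le> 2 * real a + 2" using a(1) d(2) M(2) by linarith
    then have "real M \<le> 2 / \<epsilon> * (real a + 1)" using assms(1) by (simp add: field_simps)
    then have "real M + real a < (2 + 2 / \<epsilon>) * (real a + 1)" by (simp add: algebra_simps)
    also have "\<dots> \<le> real L * \<delta> * (real a + 1)"
      using L assms(4) by (intro mult_right_mono) (simp_all add: field_simps)
    finally show "real M + real a < real (a + 1) * (real L * \<delta>)" by (simp add: algebra_simps)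
  next
    fix n assume "a < n" "n \<le> a + L"
    then have "real a + 1 \<le> real n" "real n \<le> real a + real L" by simp_all
    then have "(\<epsilon> - \<eta>) * real M < real n" "real n < \<epsilon> * real M"
      using a(1) d M(1) by (simp_all add: algebra_simps)
    then show "\<bar>real n / real M - \<epsilon>\<bar> < \<eta>"
      using \<open>0 < real M\<close> by (simp add: abs_less_iff field_simps)
  qed
qed

section \<open>The counterexample\<close>

lemma abs_eig_le_hnorm:
  assumes "l \<in># eigs n d c e x"
  shows "\<bar>l\<bar> \<le> hnorm n d c e x"
proof -
  have "hnorm n d c e x = Max (abs ` set_mset (eigs n d c e x))"
    using assms by (auto simp: hnorm_def)
  moreover have "\<bar>l\<bar> \<le> Max (abs ` set_mset (eigs n d c e x))"
    using assms by (intro Max_ge) simp_all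
  ultimately show ?thesis by simp
qed

lemma esym_coordinate_admissible:
  assumes "1 \<le> d" "d \<le> M" "real d \<le> \<epsilon> * real M" "i < M"
  shows "indicator {i} \<in> vecs M \<and>
    in_Lambda_plus M d (esym_coeffs M d) (indicator {..<M}) (indicator {i}) \<and>
    hrk M d (esym_coeffs M d) (indicator {..<M}) (indicator {i}) \<le> 1 \<and>
    htr M d (esym_coeffs M d) (indicator {..<M}) (indicator {i}) \<le> \<epsilon>"
proof (intro conjI)
  have eigs: "eigs M d (esym_coeffs M d) (indicator {..<M}) (indicator {i}) =
      add_mset (real d / real M) (replicate_mset (d - 1) 0)"
    using assms(4,1,2) by (rule eigs_esym_coordinate)
  show "indicator {i} \<in> vecs M" using assms(4) by (simp add: vecs_def)
  show "in_Lambda_plus M d (esym_coeffs M d) (indicator {..<M}) (indicator {i})"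
    unfolding in_Lambda_plus_def eigs by simp
  have no_nonzero: "filter_mset (\<lambda>l. l \<noteq> 0) (replicate_mset n (0::real)) = {#}" for n
    by simp
  show "hrk M d (esym_coeffs M d) (indicator {..<M}) (indicator {i}) \<le> 1"
    unfolding hrk_def eigs by (simp add: no_nonzero)
  have "real d / real M \<le> \<epsilon>" using assms(3,4) by (simp add: divide_le_eq mult.commute)
  then show "htr M d (esym_coeffs M d) (indicator {..<M}) (indicator {i}) \<le> \<epsilon>"
    unfolding htr_def eigs by simp
qed

text \<open>If all eigenvalues of the indicator vector of P were at most \<beta>, the coefficients
  e_n(\<beta> - 1_P) of (1 + (\<beta> - 1) t)^|P| (1 + \<beta> t)^(M - |P|) would be nonnegative up to n = d,
  while the window conditions force a sign change.\<close>

lemma esym_indicator_large_eig: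
  assumes "0 < \<beta>" "\<beta> < 1" "d \<le> M" "P \<subseteq> {..<M}" "real M / real k \<le> real (card P)"
    and "1 \<le> a" "a + L < d" "0 < \<delta>" "real M + real a < real (a + 1) * (real L * \<delta>)"
    and window: "\<And>n. a < n \<Longrightarrow> n \<le> a + L \<Longrightarrow> 2 * \<delta> < osc_margin \<beta> (1 / real k) (real n / real M)"
  shows "\<exists>l\<in>#eigs M d (esym_coeffs M d) (indicator {..<M}) (indicator P). \<beta> < l"
proof (rule ccontr)
  assume none: "\<not> ?thesis"
  obtain L' where L': "has_eigs M d (esym_coeffs M d) (indicator {..<M}) (indicator P) L'"
    using esym_has_eigs[OF assms(3)] by blast
  then have "eigs M d (esym_coeffs M d) (indicator {..<M}) (indicator P) = L'"
    using assms(3) by (intro eigs_eqI) (simp_all add: peval_esym_coeffs_ones binomial_eq_0_iff)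
  then have le: "\<forall>l\<in>#L'. l \<le> \<beta>" using none by auto
  define s where "s = card P"
  have "s \<le> M" using assms(4) card_mono[of "{..<M}" P] by (simp add: s_def)
  define c where "c j = coeff ([:1, \<beta> - 1:] ^ s * [:1, \<beta>:] ^ (M - s)) j" for j
  have c_esym: "c n = esym (\<lambda>i. \<beta> - indicator P i) M n" for n
    using esym_two_valued[OF assms(4), of "\<beta> - 1" \<beta> n]
    by (simp add: c_def s_def esym_cong[of M "\<lambda>i. \<beta> - indicator P i" "\<lambda>i. if i \<in> P then \<beta> - 1 else \<beta>"])
  have "\<exists>n\<le>d. c n < 0"
  proof (rule three_term_recurrence_sign_change[where A = "\<lambda>n. real M * \<beta> - real s - real n * (2 * \<beta> - 1)"
        and B = "\<lambda>n. \<beta> * (1 - \<beta>) * (real M - real n + 1)"])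
    show "c 0 > 0" by (simp add: c_esym)
    show "real (n + 1) * c (n + 1) = (real M * \<beta> - real s - real n * (2 * \<beta> - 1)) * c n
        - \<beta> * (1 - \<beta>) * (real M - real n + 1) * c (n - 1)" if "1 \<le> n" for n
      using coeff_binomial_product_recurrence[OF \<open>s \<le> M\<close> that] by (simp add: c_def)
    show "\<beta> * (1 - \<beta>) * (real M - real n + 1) > 0" if "n < d" for n
      using that assms(1-3) by simp
    have "real M * \<beta> \<le> real M" "0 \<le> real a * \<beta>" using assms(1,2) by (simp_all add: mult_left_le)
    then have "real M * \<beta> - real s - real a * (2 * \<beta> - 1) \<le> real M + real a"
      by (simp add: algebra_simps)
    then show "real M * \<beta> - real s - real a * (2 * \<beta> - 1) < real (a + 1) * (real L * \<delta>)"
      using assms(9) by linarith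
    show "real M * \<beta> - real s - real n * (2 * \<beta> - 1) + real (n + 1) * \<delta>
        \<le> 2 * sqrt (real (n + 1) * (\<beta> * (1 - \<beta>) * (real M - real n + 1)))" if "a < n" "n \<le> a + L" for n
      using that assms(1-3,5,7,8) window[OF that]
      by (intro recurrence_step_from_osc_margin) (simp_all add: s_def)
  qed (use assms(6,7) in simp_all)
  then obtain n where "n \<le> d" "c n < 0" by blast
  moreover have "0 \<le> c n" using esym_nonneg_above_eigs[OF assms(3) L' le \<open>n \<le> d\<close>] by (simp add: c_esym)
  ultimately show False by simp
qed

lemma exists_large_fiber:
  fixes S :: "nat \<Rightarrow> nat"
  assumes "\<forall>i<m. S i < k" and "0 < k"
  shows "\<exists>j<k. real m / real k \<le> real (card {i. i < m \<and> S i = j})"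
proof (rule ccontr)
  assume "\<not> ?thesis"
  then have small: "\<forall>j<k. real (card {i. i < m \<and> S i = j}) < real m / real k" by auto
  have "{..<m} = (\<Union>j<k. {i. i < m \<and> S i = j})" using assms(1) by auto
  then have "card {..<m} = card (\<Union>j<k. {i. i < m \<and> S i = j})" by simp
  also have "\<dots> = (\<Sum>j<k. card {i. i < m \<and> S i = j})" by (rule card_UN_disjoint) auto
  finally have "m = (\<Sum>j<k. card {i. i < m \<and> S i = j})" by simp
  then have "real m = (\<Sum>j<k. real (card {i. i < m \<and> S i = j}))" by (simp only: of_nat_sum[symmetric])
  also have "\<dots> < (\<Sum>j<k. real m / real k)" using small assms(2) by (intro sum_strict_mono) auto
  finally show False using assms(2) by simp
qed

lemma esym_coordinates_partition_norm:
  assumes "0 < \<beta>" "\<beta> < 1" "0 < k" "d \<le> M" "1 \<le> a" "a + L < d" "0 < \<delta>"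
    and "real M + real a < real (a + 1) * (real L * \<delta>)"
    and "\<And>n. a < n \<Longrightarrow> n \<le> a + L \<Longrightarrow> 2 * \<delta> < osc_margin \<beta> (1 / real k) (real n / real M)"
    and "\<forall>i<M. S i < k"
  shows "\<exists>j<k. \<beta> < hnorm M d (esym_coeffs M d) (indicator {..<M})
    (\<lambda>l. \<Sum>i\<in>{i. i < M \<and> S i = j}. indicator {i} l)"
proof -
  obtain j where j: "j < k" "real M / real k \<le> real (card {i. i < M \<and> S i = j})"
    using exists_large_fiber assms(3,10) by blast
  define P where "P = {i. i < M \<and> S i = j}"
  have "P \<subseteq> {..<M}" by (auto simp: P_def)
  then obtain l where "l \<in># eigs M d (esym_coeffs M d) (indicator {..<M}) (indicator P)" "\<beta> < l"
    using esym_indicator_large_eig[OF assms(1,2,4) _ j(2)[folded P_def] assms(5-9)] by blast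
  then have "\<beta> < hnorm M d (esym_coeffs M d) (indicator {..<M}) (indicator P)"
    using abs_eig_le_hnorm abs_ge_self by (metis order.strict_trans2)
  moreover have "(\<lambda>l. \<Sum>i\<in>P. indicator {i} l) = (indicator P :: nat \<Rightarrow> real)"
    by (simp add: fun_eq_iff indicator_def sum.delta P_def)
  ultimately show ?thesis using j(1) unfolding P_def by auto
qed

definition partition_norm_bound :: "nat \<Rightarrow> real \<Rightarrow> real \<Rightarrow> bool" where
  "partition_norm_bound k \<epsilon> B \<longleftrightarrow>
     (\<forall>(n::nat) (d::nat) (c::(nat \<Rightarrow> nat) \<Rightarrow> real) (e::nat \<Rightarrow> real) (m::nat) (u::nat \<Rightarrow> nat \<Rightarrow> real).
        hyperbolic n d c e \<and>
        (\<forall>i<m. u i \<in> vecs n \<and> in_Lambda_plus n d c e (u i) \<and>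
               hrk n d c e (u i) \<le> 1 \<and> htr n d c e (u i) \<le> \<epsilon>) \<and>
        (\<lambda>j. \<Sum>i<m. u i j) = e
        \<longrightarrow> (\<exists>S::nat \<Rightarrow> nat. (\<forall>i<m. S i < k) \<and>
               (\<forall>j<k. hnorm n d c e (\<lambda>l. \<Sum>i\<in>{i. i < m \<and> S i = j}. u i l) \<le> B)))"

lemma partition_norm_bound_fails:
  assumes "k \<ge> 2" "0 < \<epsilon>" "\<epsilon> \<le> 1 - 1 / real k"
    and "B < 1 / real k + \<epsilon> * (real k - 2) / real k + 2 * sqrt (real k - 1) / real k * sqrt (\<epsilon> - \<epsilon>\<^sup>2)"
  shows "\<not> partition_norm_bound k \<epsilon> B"
proof
  assume bound: "partition_norm_bound k \<epsilon> B"
  obtain \<beta> where \<beta>: "B < \<beta>" "0 < \<beta>" "\<beta> < 1" "0 < osc_margin \<beta> (1 / real k) \<epsilon>"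
    using exists_beta_osc_margin_pos[OF assms] .
  define \<delta> where "\<delta> = osc_margin \<beta> (1 / real k) \<epsilon> / 4"
  obtain \<eta> where "0 < \<eta>" and \<eta>: "\<And>\<nu>. \<bar>\<nu> - \<epsilon>\<bar> < \<eta> \<Longrightarrow> 2 * \<delta> < osc_margin \<beta> (1 / real k) \<nu>"
    using osc_margin_near[OF \<beta>(4)] unfolding \<delta>_def by auto
  have "0 < \<delta>" using \<beta>(4) by (simp add: \<delta>_def)
  have "0 < 1 / real k" using assms(1) by simp
  then have "\<epsilon> < 1" using assms(3) by linarith
  then obtain M d a L where window: "d \<le> M" "real d \<le> \<epsilon> * real M" "1 \<le> a" "a + L < d"
      "real M + real a < real (a + 1) * (real L * \<delta>)"
      "\<And>n. a < n \<Longrightarrow> n \<le> a + L \<Longrightarrow> \<bar>real n / real M - \<epsilon>\<bar> < \<eta>"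
    by (rule window_parameters[OF assms(2) _ \<open>0 < \<eta>\<close> \<open>0 < \<delta>\<close>]) blast
  have "1 \<le> d" using window(3,4) by linarith
  have "(\<lambda>j. \<Sum>i<M. indicator {i} j) = (indicator {..<M} :: nat \<Rightarrow> real)"
    by (simp add: fun_eq_iff indicator_def sum.delta)
  then obtain S where S: "\<forall>i<M. S i < k" and le_B: "\<forall>j<k. hnorm M d (esym_coeffs M d) (indicator {..<M})
      (\<lambda>l. \<Sum>i\<in>{i. i < M \<and> S i = j}. indicator {i} l) \<le> B"
    using bound[unfolded partition_norm_bound_def, rule_format, of M d "esym_coeffs M d"
        "indicator {..<M}" M "\<lambda>i. indicator {i}"]
      hyperbolic_esym[OF window(1)] esym_coordinate_admissible[OF \<open>1 \<le> d\<close> window(1,2)] by blast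
  have "2 * \<delta> < osc_margin \<beta> (1 / real k) (real n / real M)" if "a < n" "n \<le> a + L" for n
    using \<eta>[OF window(6)[OF that]] .
  then obtain j where "j < k" and "\<beta> < hnorm M d (esym_coeffs M d) (indicator {..<M})
      (\<lambda>l. \<Sum>i\<in>{i. i < M \<and> S i = j}. indicator {i} l)"
    using esym_coordinates_partition_norm[OF \<beta>(2,3) _ window(1,3,4) \<open>0 < \<delta>\<close> window(5) _ S]
      assms(1) by auto
  then show False using le_B \<beta>(1) by fastforce
qed

theorem proposition7p1:
  fixes k :: nat and \<epsilon> :: real
  assumes "k \<ge> 2" and "0 < \<epsilon>" and "\<epsilon> \<le> 1 - 1 / real k"
  shows "\<not> (\<exists>B::real.
     B < 1 / real k + \<epsilon> * (real k - 2) / real k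
          + 2 * sqrt (real k - 1) / real k * sqrt (\<epsilon> - \<epsilon>^2) \<and>
     (\<forall>(n::nat) (d::nat) (c::(nat \<Rightarrow> nat) \<Rightarrow> real) (e::nat \<Rightarrow> real) (m::nat) (u::nat \<Rightarrow> nat \<Rightarrow> real).
        hyperbolic n d c e \<and>
        (\<forall>i<m. u i \<in> vecs n \<and> in_Lambda_plus n d c e (u i) \<and>
               hrk n d c e (u i) \<le> 1 \<and> htr n d c e (u i) \<le> \<epsilon>) \<and>
        (\<lambda>j. \<Sum>i<m. u i j) = e
        \<longrightarrow> (\<exists>S::nat \<Rightarrow> nat. (\<forall>i<m. S i < k) \<and>
               (\<forall>j<k. hnorm n d c e (\<lambda>l. \<Sum>i\<in>{i. i < m \<and> S i = j}. u i l) \<le> B))))"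
  unfolding partition_norm_bound_def[symmetric]
  using partition_norm_bound_fails[OF assms] by blast

end
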